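(* (Computing the weighted, repeated argument sum.) For complex numbers $x_0,\dots,x_q$ (repetitions allowed) and $\tau\in\mathbb{R}$, $$\sum_{j=0}^q x_j\,e^{-\tau[x_0,\ldots,x_q,x_j]}=\begin{cases}(-x_0\tau-q)\,e^{-\tau[x_0,\ldots,x_q]}-\tau\,e^{-\tau[x_1,\ldots,x_q]}, & q>0,\\ -\tau x_0e^{-\tau x_0}, & q=0.\end{cases}$$
   Context: For $t\in\mathbb{R}$ and numbers $y_0,\dots,y_p$ (repetitions allowed), $e^{t[y_0,\ldots,y_p]}$ denotes the divided difference of $f(x)=e^{tx}$, $f[y_0,\ldots,y_p]=\frac{1}{2\pi i}\oint_\Gamma\frac{f(x)}{\prod_{i=0}^p(x-y_i)}\,\mathrm{d}x$, $\Gamma$ a positively oriented contour enclosing all $y_i$. The multiset $[x_0,\ldots,x_q,x_j]$ contains $x_j$ twice. *)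

theory Defs
  imports "HOL-Complex_Analysis.Complex_Analysis"
begin

text \<open>Divided difference of f(x) = e^{t x} at the nodes ys (a list, repetitions allowed),
  defined by the contour integral (1/(2 pi i)) \<oint> f(x) / prod (x - y_i) dx over a positively
  oriented circle centred at 0 whose radius exceeds every |y_i| (so it encloses all nodes).\<close>
definition exp_dd :: "real \<Rightarrow> complex list \<Rightarrow> complex" where
  "exp_dd t ys =
     contour_integral (circlepath 0 (1 + sum_list (map norm ys)))
       (\<lambda>z. exp (complex_of_real t * z) / prod_list (map (\<lambda>y. z - y) ys))
     / (2 * complex_of_real pi * \<i>)"

end

theory Submission
  imports Defs
begin

(* For an entire f write f[y_0,...,y_p] = (2 pi i)^-1 * contour integral of f(z) / P(z), where
   P(z) = prod_i (z - y_i). Since x_j / (z - x_j) = z / (z - x_j) - 1, the integrand of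
   sum_j x_j f[x_0,...,x_q,x_j] is f/P * (z P'/P - (q + 1)). The derivative
   (z f / P)' = f/P + z f'/P - z f P'/P^2 integrates to zero around the circle, and
   z/P = x_0/P + 1/P_1 with P_1(z) = prod_{i>=1} (z - x_i), so
     sum_j x_j f[x_0,...,x_q,x_j] = x_0 f'[x_0,...,x_q] + f'[x_1,...,x_q] - q f[x_0,...,x_q].
   For f(z) = exp(-tau z) we have f' = -tau f; for q = 0 the divided difference over no nodes
   vanishes and f[x_0] = f(x_0). *)

definition node_poly :: "complex list \<Rightarrow> complex \<Rightarrow> complex" where
  "node_poly ys z = (\<Prod>y\<leftarrow>ys. z - y)"

definition divided_difference :: "(complex \<Rightarrow> complex) \<Rightarrow> complex list \<Rightarrow> complex" where
  "divided_difference f ys =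
     contour_integral (circlepath 0 (1 + sum_list (map norm ys))) (\<lambda>z. f z / node_poly ys z)
     / (2 * complex_of_real pi * \<i>)"

lemma exp_dd_eq_divided_difference:
  "exp_dd t = divided_difference (\<lambda>z. exp (complex_of_real t * z))"
  by (simp add: fun_eq_iff exp_dd_def divided_difference_def node_poly_def)

lemma node_poly_simps [simp]:
  "node_poly [] z = 1"
  "node_poly (a # ys) z = (z - a) * node_poly ys z"
  "node_poly (ys @ zs) z = node_poly ys z * node_poly zs z"
  by (simp_all add: node_poly_def)

lemma node_poly_eq_0_iff [simp]: "node_poly ys z = 0 \<longleftrightarrow> z \<in> set ys"
  by (induction ys) auto

lemma holomorphic_on_node_poly [holomorphic_intros]: "node_poly ys holomorphic_on A"
  unfolding node_poly_def by (induction ys) (auto intro!: holomorphic_intros)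

lemma has_field_derivative_node_poly:
  assumes "z \<notin> set ys"
  shows "(node_poly ys has_field_derivative node_poly ys z * (\<Sum>y\<leftarrow>ys. 1 / (z - y))) (at z)"
  using assms
proof (induction ys)
  case Nil
  then show ?case by (simp add: node_poly_def)
next
  case (Cons a ys)
  have "node_poly (a # ys) = (\<lambda>w. (w - a) * node_poly ys w)"
    by (simp add: fun_eq_iff)
  moreover have "((\<lambda>w. (w - a) * node_poly ys w) has_field_derivative
      node_poly ys z + (z - a) * (node_poly ys z * (\<Sum>y\<leftarrow>ys. 1 / (z - y)))) (at z)"
    using Cons by (auto intro!: derivative_eq_intros)
  moreover have "node_poly ys z + (z - a) * (node_poly ys z * (\<Sum>y\<leftarrow>ys. 1 / (z - y)))
      = node_poly (a # ys) z * (\<Sum>y\<leftarrow>a # ys. 1 / (z - y))"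
    using Cons.prems by (simp add: field_simps)
  ultimately show ?case
    by simp
qed

lemma contour_integral_circlepath_node_poly:
  assumes f: "f holomorphic_on UNIV" and r: "\<forall>y\<in>set ys. norm y < r"
  shows "contour_integral (circlepath 0 r) (\<lambda>z. f z / node_poly ys z)
           = 2 * pi * \<i> * (\<Sum>p\<in>set ys. residue (\<lambda>z. f z / node_poly ys z) p)"
proof -
  have "contour_integral (circlepath 0 r) (\<lambda>z. f z / node_poly ys z)
      = 2 * pi * \<i> * (\<Sum>p\<in>set ys. winding_number (circlepath 0 r) p
                                        * residue (\<lambda>z. f z / node_poly ys z) p)"
    using r by (intro Residue_theorem[where S=UNIV])
      (auto intro!: holomorphic_intros holomorphic_on_subset[OF f])
  also have "\<dots> = 2 * pi * \<i> * (\<Sum>p\<in>set ys. residue (\<lambda>z. f z / node_poly ys z) p)"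
    using r by (intro arg_cong2[where f="(*)"] refl sum.cong) (auto simp: winding_number_circlepath)
  finally show ?thesis .
qed

lemma norm_lt_divided_difference_radius:
  "\<forall>y\<in>set ys. norm y < 1 + sum_list (map norm ys)"
  using member_le_sum_list[of _ "map norm ys"] by force

lemma divided_difference_eq_sum_residues:
  assumes "f holomorphic_on UNIV"
  shows "divided_difference f ys = (\<Sum>p\<in>set ys. residue (\<lambda>z. f z / node_poly ys z) p)"
  unfolding divided_difference_def
  by (simp add: contour_integral_circlepath_node_poly[OF assms norm_lt_divided_difference_radius])

lemma has_contour_integral_divided_difference:
  assumes f: "f holomorphic_on UNIV" and r: "\<forall>y\<in>set ys. norm y < r"
  shows "((\<lambda>z. f z / node_poly ys z) has_contour_integral 2 * pi * \<i> * divided_difference f ys)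
           (circlepath 0 r)"
proof -
  have "(\<lambda>z. f z / node_poly ys z) contour_integrable_on circlepath 0 r"
    using r by (intro contour_integrable_holomorphic_simple[where S="- set ys"])
      (auto intro!: holomorphic_intros holomorphic_on_subset[OF f] open_Compl finite_imp_closed)
  from has_contour_integral_integral[OF this] show ?thesis
    by (simp add: contour_integral_circlepath_node_poly[OF f r] divided_difference_eq_sum_residues[OF f])
qed

lemma divided_difference_Nil:
  "f holomorphic_on UNIV \<Longrightarrow> divided_difference f [] = 0"
  by (simp add: divided_difference_eq_sum_residues)

lemma divided_difference_single:
  "f holomorphic_on UNIV \<Longrightarrow> divided_difference f [a] = f a"
  by (simp add: divided_difference_eq_sum_residues residue_simple[OF open_UNIV UNIV_I])

lemma divided_difference_cmult:
  assumes f: "f holomorphic_on UNIV"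
  shows "divided_difference (\<lambda>z. c * f z) ys = c * divided_difference f ys"
proof -
  note r = norm_lt_divided_difference_radius[of ys]
  let ?C = "circlepath 0 (1 + sum_list (map norm ys))"
  have "((\<lambda>z. c * f z / node_poly ys z) has_contour_integral
          c * (2 * pi * \<i> * divided_difference f ys)) ?C"
    using has_contour_integral_lmul[OF has_contour_integral_divided_difference[OF f r]] by simp
  moreover have "((\<lambda>z. c * f z / node_poly ys z) has_contour_integral
          2 * pi * \<i> * divided_difference (\<lambda>z. c * f z) ys) ?C"
    using f r by (intro has_contour_integral_divided_difference holomorphic_intros)
  ultimately show ?thesis
    by (auto dest: has_contour_integral_unique)
qed

lemma has_contour_integral_sum_list:
  assumes "\<And>y. y \<in> set ys \<Longrightarrow> (h y has_contour_integral I y) g"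
  shows "((\<lambda>z. \<Sum>y\<leftarrow>ys. h y z) has_contour_integral (\<Sum>y\<leftarrow>ys. I y)) g"
  using assms by (induction ys) (auto intro: has_contour_integral_add has_contour_integral_0)

lemma sum_list_div_diff_eq:
  fixes z :: complex
  assumes "z \<notin> set ys"
  shows "(\<Sum>y\<leftarrow>ys. y / (z - y)) + of_nat (length ys) = z * (\<Sum>y\<leftarrow>ys. 1 / (z - y))"
  using assms
proof (induction ys)
  case (Cons a ys)
  have "(\<Sum>y\<leftarrow>a # ys. y / (z - y)) + of_nat (length (a # ys))
      = (a / (z - a) + 1) + ((\<Sum>y\<leftarrow>ys. y / (z - y)) + of_nat (length ys))"
    by (simp add: algebra_simps)
  also have "\<dots> = z / (z - a) + z * (\<Sum>y\<leftarrow>ys. 1 / (z - y))"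
    using Cons by (simp add: field_simps)
  also have "\<dots> = z * (\<Sum>y\<leftarrow>a # ys. 1 / (z - y))"
    by (simp add: distrib_left)
  finally show ?case .
qed simp

lemma weighted_sum_repeat_integrand:
  fixes z w w' :: complex
  assumes z: "z \<notin> set (a # zs)"
  shows "(\<Sum>y\<leftarrow>a # zs. y * (w / node_poly (a # zs @ [y]) z)) =
      a * (w' / node_poly (a # zs) z) + w' / node_poly zs z
      - of_nat (length zs) * (w / node_poly (a # zs) z)
      - (w + z * w' - z * w * (\<Sum>y\<leftarrow>a # zs. 1 / (z - y))) / node_poly (a # zs) z"
proof -
  define P where "P = node_poly (a # zs) z"
  define S where "S = (\<Sum>y\<leftarrow>a # zs. 1 / (z - y))"
  have "(\<Sum>y\<leftarrow>a # zs. y * (w / node_poly (a # zs @ [y]) z))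
      = w / P * (\<Sum>y\<leftarrow>a # zs. y / (z - y))"
    unfolding P_def sum_list_const_mult[symmetric]
    by (intro arg_cong[where f=sum_list] map_cong) (auto simp: mult_ac)
  also have "\<dots> = w / P * (z * S - of_nat (length zs + 1))"
    using sum_list_div_diff_eq[OF z] by (simp add: S_def eq_diff_eq)
  also have "\<dots> = (w * (z * S - of_nat (length zs + 1))) / P"
    by simp
  also have "\<dots> = (a * w' + (z - a) * w' - of_nat (length zs) * w - (w + z * w' - z * w * S)) / P"
    by (rule arg_cong[where f="\<lambda>u. u / P"]) (simp add: algebra_simps)
  also have "\<dots> = a * (w' / P) + w' / node_poly zs z - of_nat (length zs) * (w / P)
      - (w + z * w' - z * w * S) / P"
    using z by (simp add: P_def add_divide_distrib diff_divide_distrib)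
  finally show ?thesis
    by (simp only: P_def S_def)
qed

lemma has_field_derivative_mult_div_node_poly:
  assumes f: "f holomorphic_on UNIV" and z: "z \<notin> set ys"
  shows "((\<lambda>w. w * f w / node_poly ys w) has_field_derivative
           (f z + z * deriv f z - z * f z * (\<Sum>y\<leftarrow>ys. 1 / (z - y))) / node_poly ys z) (at z)"
proof -
  define S where "S = (\<Sum>y\<leftarrow>ys. 1 / (z - y))"
  have "((\<lambda>w. w * f w) has_field_derivative f z + z * deriv f z) (at z)"
    by (auto intro!: derivative_eq_intros holomorphic_derivI[OF f])
  from DERIV_divide[OF this has_field_derivative_node_poly[OF z, folded S_def]] z
  have "((\<lambda>w. w * f w / node_poly ys w) has_field_derivative
      ((f z + z * deriv f z) * node_poly ys z - z * f z * (node_poly ys z * S))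
        / (node_poly ys z * node_poly ys z)) (at z)"
    by simp
  also have "((f z + z * deriv f z) * node_poly ys z - z * f z * (node_poly ys z * S))
        / (node_poly ys z * node_poly ys z) = (f z + z * deriv f z - z * f z * S) / node_poly ys z"
    using z by (simp add: field_simps)
  finally show ?thesis
    unfolding S_def .
qed

lemma weighted_sum_divided_difference_repeat:
  assumes f: "f holomorphic_on UNIV"
  shows "(\<Sum>y\<leftarrow>a # zs. y * divided_difference f (a # zs @ [y])) =
         a * divided_difference (deriv f) (a # zs) + divided_difference (deriv f) zs
         - of_nat (length zs) * divided_difference f (a # zs)"
proof -
  define ys where "ys = a # zs"
  define r where "r = 1 + sum_list (map norm ys)"
  define c where "c = 2 * pi * \<i>"
  define g' where
    "g' z = (f z + z * deriv f z - z * f z * (\<Sum>y\<leftarrow>ys. 1 / (z - y))) / node_poly ys z" for z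
  have r: "\<forall>y\<in>set ys. norm y < r"
    unfolding r_def by (rule norm_lt_divided_difference_radius)
  then have off_nodes: "z \<notin> set ys" if "z \<in> path_image (circlepath 0 r)" for z
    using that by force
  have f': "deriv f holomorphic_on UNIV"
    using f by (intro holomorphic_deriv) auto
  have exact: "(g' has_contour_integral 0) (circlepath 0 r)"
  proof (rule Cauchy_theorem_primitive)
    fix z assume "z \<in> - set ys"
    then show "((\<lambda>w. w * f w / node_poly ys w) has_field_derivative g' z) (at z within - set ys)"
      unfolding g'_def
      by (intro has_field_derivative_at_within[OF has_field_derivative_mult_div_node_poly[OF f]]) auto
  qed (use off_nodes in auto)
  have integrand: "(\<Sum>y\<leftarrow>ys. y * (f z / node_poly (ys @ [y]) z)) =
      a * (deriv f z / node_poly ys z) + deriv f z / node_poly zs z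
        - of_nat (length zs) * (f z / node_poly ys z) - g' z"
    if "z \<in> path_image (circlepath 0 r)" for z
    unfolding g'_def ys_def append_Cons
    using off_nodes[OF that] unfolding ys_def by (rule weighted_sum_repeat_integrand)
  have "((\<lambda>z. \<Sum>y\<leftarrow>ys. y * (f z / node_poly (ys @ [y]) z)) has_contour_integral
          (\<Sum>y\<leftarrow>ys. y * (c * divided_difference f (ys @ [y])))) (circlepath 0 r)"
    using r unfolding c_def
    by (intro has_contour_integral_sum_list has_contour_integral_lmul
        has_contour_integral_divided_difference f) auto
  then have "((\<lambda>z. a * (deriv f z / node_poly ys z) + deriv f z / node_poly zs z
        - of_nat (length zs) * (f z / node_poly ys z) - g' z) has_contour_integral
          (\<Sum>y\<leftarrow>ys. y * (c * divided_difference f (ys @ [y])))) (circlepath 0 r)"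
    by (rule has_contour_integral_eq) (use integrand in blast)
  moreover have "((\<lambda>z. a * (deriv f z / node_poly ys z) + deriv f z / node_poly zs z
        - of_nat (length zs) * (f z / node_poly ys z) - g' z) has_contour_integral
          a * (c * divided_difference (deriv f) ys) + c * divided_difference (deriv f) zs
          - of_nat (length zs) * (c * divided_difference f ys) - 0) (circlepath 0 r)"
    using r unfolding c_def
    by (intro has_contour_integral_diff has_contour_integral_add has_contour_integral_lmul
        has_contour_integral_divided_difference f f' exact) (auto simp: ys_def)
  ultimately have "c * (\<Sum>y\<leftarrow>ys. y * divided_difference f (ys @ [y]))
      = c * (a * divided_difference (deriv f) ys + divided_difference (deriv f) zs
          - of_nat (length zs) * divided_difference f ys)"
    by (auto dest: has_contour_integral_unique simp: sum_list_const_mult[symmetric] algebra_simps)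
  then show ?thesis
    by (simp add: c_def ys_def)
qed

lemma exp_dd_Nil: "exp_dd t [] = 0"
  unfolding exp_dd_eq_divided_difference by (intro divided_difference_Nil holomorphic_intros)

lemma exp_dd_single: "exp_dd t [a] = exp (complex_of_real t * a)"
  unfolding exp_dd_eq_divided_difference
  by (subst divided_difference_single) (auto intro!: holomorphic_intros)

lemma weighted_sum_exp_dd_repeat:
  "(\<Sum>y\<leftarrow>a # zs. y * exp_dd t (a # zs @ [y])) =
     (complex_of_real t * a - of_nat (length zs)) * exp_dd t (a # zs) + complex_of_real t * exp_dd t zs"
proof -
  define f where "f z = exp (complex_of_real t * z)" for z
  have f: "f holomorphic_on UNIV"
    unfolding f_def by (intro holomorphic_intros)
  have "deriv f = (\<lambda>z. complex_of_real t * f z)"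
    unfolding f_def by (intro ext DERIV_imp_deriv) (auto intro!: derivative_eq_intros)
  then have "divided_difference (deriv f) ys = complex_of_real t * divided_difference f ys" for ys
    using divided_difference_cmult[OF f] by simp
  with weighted_sum_divided_difference_repeat[OF f, of a zs] show ?thesis
    unfolding exp_dd_eq_divided_difference f_def[symmetric] by (simp add: algebra_simps)
qed

theorem corollary1:
  fixes x :: "nat \<Rightarrow> complex" and q :: nat and \<tau> :: real
  shows "(\<Sum>j\<le>q. x j * exp_dd (- \<tau>) (map x [0..<q+1] @ [x j])) =
         (if q > 0
          then (- x 0 * complex_of_real \<tau> - of_nat q) * exp_dd (- \<tau>) (map x [0..<q+1])
               - complex_of_real \<tau> * exp_dd (- \<tau>) (map x [1..<q+1])
          else - complex_of_real \<tau> * x 0 * exp (- complex_of_real \<tau> * x 0))"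
proof -
  define zs where "zs = map x [1..<q+1]"
  have nodes: "map x [0..<q+1] = x 0 # zs"
    unfolding zs_def by (simp add: upt_conv_Cons del: upt_Suc)
  have zs_Nil: "q = 0 \<Longrightarrow> zs = []"
    by (simp add: zs_def)
  have "(\<Sum>j\<le>q. x j * exp_dd (- \<tau>) (map x [0..<q+1] @ [x j]))
      = (\<Sum>y\<leftarrow>map x [0..<q+1]. y * exp_dd (- \<tau>) (map x [0..<q+1] @ [y]))"
    by (simp add: interv_sum_list_conv_sum_set_nat atLeast0LessThan lessThan_Suc_atMost del: upt_Suc)
  also have "\<dots> = (- complex_of_real \<tau> * x 0 - of_nat q) * exp_dd (- \<tau>) (x 0 # zs)
      - complex_of_real \<tau> * exp_dd (- \<tau>) zs"
    unfolding nodes using weighted_sum_exp_dd_repeat[where a="x 0" and zs=zs and t="- \<tau>"]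
    by (simp add: zs_def)
  finally show ?thesis
    unfolding nodes zs_def[symmetric]
    by (cases "q = 0") (simp_all add: zs_Nil exp_dd_Nil exp_dd_single algebra_simps)
qed

end
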